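(* Let $p(m,n)$ be as defined in the context, and let $x^N_0,y^N_0\in N^{-1}\mathbb{Z}_{>0}$ with $x^N_0\to x_0>0$ and $y^N_0\to y_0>0$ as $N\to\infty$. If $x_0\ne y_0$, then $$\lim_{N\to\infty}p(Nx^N_0,Ny^N_0)=\mathbf 1_{\{x_0<y_0\}}.$$
   Context: For integers $m,n\ge0$ with $m+n>0$, $p(m,n)$ is the unique function satisfying $p(m,n)=\frac{n}{m+n}p(m-1,n)+\frac{m}{m+n}p(m,n-1)$ for $m,n>0$, with $p(m,0)=0$ for $m>0$ and $p(0,n)=1$ for $n>0$. It is the probability that player A (starting with $m$ units) is ruined before player B (starting with $n$ units) when, from state $(m,n)$, B loses a unit with probability $m/(m+n)$ and A loses a unit with probability $n/(m+n)$. *)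

theory Defs
  imports "HOL-Analysis.Analysis"
begin

text \<open>Ruin probability p(m,n). The value at (0,0) is not specified by the paper
  and is set to 0 by convention (it is never reached from states with m,n > 0).\<close>
fun ruin_p :: "nat \<Rightarrow> nat \<Rightarrow> real" where
  "ruin_p 0 0 = 0"
| "ruin_p 0 (Suc n) = 1"
| "ruin_p (Suc m) 0 = 0"
| "ruin_p (Suc m) (Suc n) =
     real (Suc n) / real (Suc m + Suc n) * ruin_p m (Suc n)
   + real (Suc m) / real (Suc m + Suc n) * ruin_p (Suc m) n"

end

theory Submission
  imports Defs
begin

text \<open>Along the game, f(m,n) = n(n+1) - m(m+1) is a martingale whose increments have
  conditional second moment 4mn. Hence, for c \<ge> 0, the potential (f - c)^2 + 4mn(m+n) is a
  supermartingale, and it is at least c^2 whenever B is ruined first (m > 0, n = 0).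
  Choosing c = f(m,n) gives the Chebyshev-type bound 1 - p(m,n) \<le> 4mn/((n-m)^2(m+n)) for
  m < n, which is O(1/N) at scale N when x0 < y0. The case x0 > y0 follows by the symmetry
  p(m,n) + p(n,m) = 1.\<close>

definition ruin_potential :: "real \<Rightarrow> real \<Rightarrow> real \<Rightarrow> real" where
  "ruin_potential c m n = (n*(n+1) - m*(m+1) - c)^2 + 4*m*n*(m+n)"

lemma ruin_potential_superharmonic:
  fixes c m n :: real
  assumes "m \<ge> 0" "n \<ge> 0"
  shows "(n+1) * ruin_potential c m (n+1) + (m+1) * ruin_potential c (m+1) n
           \<le> (m+n+2) * ruin_potential c (m+1) (n+1)"
proof -
  have "(m+n+2) * ruin_potential c (m+1) (n+1)
          - ((n+1) * ruin_potential c m (n+1) + (m+1) * ruin_potential c (m+1) n)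
        = 4*(m+n+1)*((m+1)^2+(n+1)^2)"
    unfolding ruin_potential_def by (simp add: algebra_simps power2_eq_square)
  moreover have "4*(m+n+1)*((m+1)^2+(n+1)^2) \<ge> 0"
    using assms by simp
  ultimately show ?thesis by linarith
qed

lemma ruin_p_Suc_Suc_mult:
  "(real m + real n + 2) * ruin_p (Suc m) (Suc n)
     = (real n + 1) * ruin_p m (Suc n) + (real m + 1) * ruin_p (Suc m) n"
proof -
  define s where "s = real m + real n + 2"
  have "real (Suc m + Suc n) = s" "s \<noteq> 0" unfolding s_def by simp_all
  then show ?thesis
    unfolding ruin_p.simps(4) s_def[symmetric] by (simp add: distrib_left add.commute)
qed

declare ruin_p.simps(4) [simp del]

lemma ruin_p_le_1: "ruin_p m n \<le> 1"
proof (induction m n rule: ruin_p.induct)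
  case (4 m n)
  have "(real m + real n + 2) * ruin_p (Suc m) (Suc n) \<le> (real n + 1) * 1 + (real m + 1) * 1"
    unfolding ruin_p_Suc_Suc_mult using 4 by (intro add_mono mult_left_mono) auto
  also have "\<dots> = (real m + real n + 2) * 1"
    by simp
  finally show ?case by (rule mult_left_le_imp_le) simp
qed simp_all

lemma ruin_p_swap: "m + n > 0 \<Longrightarrow> ruin_p m n + ruin_p n m = 1"
proof (induction m n rule: ruin_p.induct)
  case (4 m n)
  have "(real m + real n + 2) * (ruin_p (Suc m) (Suc n) + ruin_p (Suc n) (Suc m))
          = (real n + 1) * (ruin_p m (Suc n) + ruin_p (Suc n) m)
            + (real m + 1) * (ruin_p (Suc m) n + ruin_p n (Suc m))"
    using ruin_p_Suc_Suc_mult[of m n] ruin_p_Suc_Suc_mult[of n m] by (simp add: algebra_simps)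
  also have "\<dots> = real m + real n + 2"
    using 4 by simp
  finally show ?case by simp
qed simp_all

lemma ruin_p_potential_bound:
  fixes c :: real
  assumes "c \<ge> 0"
  shows "c^2 * (1 - ruin_p m n) \<le> ruin_potential c (real m) (real n)"
proof (induction m n rule: ruin_p.induct)
  case (3 m)
  have "c^2 \<le> (real (Suc m) * (real (Suc m) + 1) + c)^2"
    using assms by (intro power_mono) auto
  also have "\<dots> = ruin_potential c (real (Suc m)) (real 0)"
    by (simp add: ruin_potential_def power2_eq_square algebra_simps)
  finally show ?case by simp
next
  case (4 m n)
  let ?V = "ruin_potential c"
  have "(real m + real n + 2) * (c^2 * (1 - ruin_p (Suc m) (Suc n)))
          = c^2 * ((real m + real n + 2) - (real m + real n + 2) * ruin_p (Suc m) (Suc n))"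
    by (simp add: algebra_simps)
  also have "\<dots> = (real n + 1) * (c^2 * (1 - ruin_p m (Suc n)))
                   + (real m + 1) * (c^2 * (1 - ruin_p (Suc m) n))"
    unfolding ruin_p_Suc_Suc_mult by (simp add: algebra_simps)
  also have "\<dots> \<le> (real n + 1) * ?V (real m) (real n + 1) + (real m + 1) * ?V (real m + 1) (real n)"
    using 4 by (intro add_mono mult_left_mono) (auto simp: add.commute)
  also have "\<dots> \<le> (real m + real n + 2) * ?V (real m + 1) (real n + 1)"
    by (rule ruin_potential_superharmonic) auto
  finally show ?case
    by (simp add: mult_le_cancel_left_pos add_pos_nonneg add.commute)
qed (simp_all add: ruin_potential_def)

lemma ruin_p_escape_bound:
  assumes "m < n"
  shows "1 - ruin_p m n \<le> 4 * real m * real n / ((real n - real m)^2 * (real m + real n))"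
proof -
  define f where "f = real n * (real n + 1) - real m * (real m + 1)"
  have diff_pos: "real n - real m > 0" using assms by simp
  have f_factor: "f = (real n - real m) * (real m + real n + 1)"
    unfolding f_def by (simp add: algebra_simps)
  then have f_ge: "f \<ge> (real n - real m) * (real m + real n)"
    using diff_pos by (simp add: algebra_simps)
  have f_pos: "f > 0"
    unfolding f_factor using diff_pos by (intro mult_pos_pos) auto
  have "f^2 * (1 - ruin_p m n) \<le> 4 * real m * real n * (real m + real n)"
    using ruin_p_potential_bound[of f m n] f_pos by (simp add: ruin_potential_def f_def)
  moreover have "((real n - real m) * (real m + real n))^2 \<le> f^2"
    using f_ge diff_pos by (intro power_mono) auto
  moreover have "1 - ruin_p m n \<ge> 0" using ruin_p_le_1[of m n] by simp
  ultimately have "((real n - real m) * (real m + real n))^2 * (1 - ruin_p m n)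
                     \<le> 4 * real m * real n * (real m + real n)"
    by (meson mult_right_mono order_trans)
  moreover have "((real n - real m) * (real m + real n))^2 > 0"
    using assms by simp
  ultimately have "1 - ruin_p m n
                     \<le> 4 * real m * real n * (real m + real n) / ((real n - real m) * (real m + real n))^2"
    by (simp add: pos_le_divide_eq mult.commute)
  also have "\<dots> = 4 * real m * real n / ((real n - real m)^2 * (real m + real n))"
    using assms
    by (simp add: power_mult_distrib power2_eq_square[of "real m + real n"] mult.assoc
                  nonzero_mult_divide_mult_cancel_right)
  finally show ?thesis .
qed

lemma escape_bound_rescale:
  fixes t x y :: real
  assumes "t > 0"
  shows "4 * (t*x) * (t*y) / ((t*y - t*x)^2 * (t*x + t*y)) = 4 * x * y / ((y - x)^2 * (x + y)) * (1 / t)"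
proof -
  have "(t*y - t*x)^2 * (t*x + t*y) = t^2 * ((y - x)^2 * (x + y)) * t"
    by (simp add: power2_eq_square algebra_simps)
  moreover have "4 * (t*x) * (t*y) = t^2 * (4 * x * y)"
    by (simp add: power2_eq_square)
  moreover have "t^2 \<noteq> 0" using assms by simp
  ultimately show ?thesis
    by (simp only: mult.assoc mult_divide_mult_cancel_left_if) simp
qed

lemma ruin_p_tendsto_1:
  fixes a b :: "nat \<Rightarrow> nat" and x0 y0 :: real
  assumes xlim: "(\<lambda>N. real (a N) / real N) \<longlonglongrightarrow> x0"
    and ylim: "(\<lambda>N. real (b N) / real N) \<longlonglongrightarrow> y0"
    and "x0 < y0"
  shows "(\<lambda>N. ruin_p (a N) (b N)) \<longlonglongrightarrow> 1"
proof -
  have "x0 \<ge> 0"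
    by (rule tendsto_lowerbound[OF xlim]) auto
  define u where "u N = real (a N) / real N" for N
  define v where "v N = real (b N) / real N" for N
  define bound where "bound N = 4 * u N * v N / ((v N - u N)^2 * (u N + v N)) * (1 / real N)" for N
  have "bound \<longlonglongrightarrow> 4 * x0 * y0 / ((y0 - x0)^2 * (x0 + y0)) * 0"
    unfolding bound_def u_def v_def using xlim ylim \<open>x0 \<ge> 0\<close> \<open>x0 < y0\<close>
    by (intro tendsto_intros lim_const_over_n) auto
  then have bound_0: "bound \<longlonglongrightarrow> 0" by simp
  have "eventually (\<lambda>N. u N < v N) sequentially"
    using order_tendstoD(1)[OF tendsto_diff[OF ylim xlim], of 0] \<open>x0 < y0\<close>
    by (simp add: u_def v_def)
  then have "eventually (\<lambda>N. norm (ruin_p (a N) (b N) - 1) \<le> bound N) sequentially"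
    using eventually_gt_at_top[of 0]
  proof eventually_elim
    case (elim N)
    have a_eq: "real (a N) = real N * u N" and b_eq: "real (b N) = real N * v N"
      using elim by (simp_all add: u_def v_def)
    from elim have "a N < b N" by (simp add: u_def v_def divide_less_cancel)
    then have "1 - ruin_p (a N) (b N)
                 \<le> 4 * real (a N) * real (b N) / ((real (b N) - real (a N))^2 * (real (a N) + real (b N)))"
      by (rule ruin_p_escape_bound)
    also have "\<dots> = bound N"
      unfolding bound_def a_eq b_eq by (rule escape_bound_rescale) (use elim in simp)
    finally show ?case using ruin_p_le_1[of "a N" "b N"] by simp
  qed
  from Lim_null_comparison[OF this bound_0] show ?thesis
    by (simp add: LIM_zero_iff)
qed

theorem mainTheorem8:
  fixes a b :: "nat \<Rightarrow> nat" and x0 y0 :: real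
  assumes apos: "\<And>N. N \<ge> 1 \<Longrightarrow> a N > 0"
    and bpos: "\<And>N. N \<ge> 1 \<Longrightarrow> b N > 0"
    and xlim: "(\<lambda>N. real (a N) / real N) \<longlonglongrightarrow> x0"
    and ylim: "(\<lambda>N. real (b N) / real N) \<longlonglongrightarrow> y0"
    and "x0 > 0" and "y0 > 0" and "x0 \<noteq> y0"
  shows "(\<lambda>N. ruin_p (a N) (b N)) \<longlonglongrightarrow> (if x0 < y0 then 1 else 0)"
proof (cases "x0 < y0")
  case True
  then show ?thesis using ruin_p_tendsto_1[OF xlim ylim] assms by simp
next
  case False
  then have "(\<lambda>N. 1 - ruin_p (b N) (a N)) \<longlonglongrightarrow> 1 - 1"
    using ruin_p_tendsto_1[OF ylim xlim] assms by (intro tendsto_intros) auto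
  moreover have "eventually (\<lambda>N. 1 - ruin_p (b N) (a N) = ruin_p (a N) (b N)) sequentially"
    using eventually_ge_at_top[of 1]
  proof eventually_elim
    case (elim N)
    then have "a N + b N > 0" using apos by simp
    from ruin_p_swap[OF this] show ?case by simp
  qed
  ultimately show ?thesis
    using False by (simp add: Lim_transform_eventually)
qed

end
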